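(* Let $AS=\langle S,F,B,D,\geq,\delta^0\rangle$ be an agent system specification and $\Delta$ a U-closed set of feasible decision profiles. For every decision profile $\delta\in\Delta$ there is a $\Delta$ joint goal set $\langle G^+,G^-\rangle$ of $AS$ such that $\delta$ is a $\langle G^+,G^-\rangle$ decision.
   Context: Let $S=\{\alpha_1,\ldots,\alpha_n\}$ be a set of agents. Fix pairwise disjoint sets of propositional atoms $A_1,\ldots,A_n$, $A=A_1\cup\cdots\cup A_n$, and a further disjoint set $W$ of atoms. $L_{A_i}$, $L_A$, $L_W$, $L_{AW}$ denote the propositional languages over $A_i$, $A$, $W$, $A\cup W$; $Cn_{AW}$ is classical propositional consequence, and $E\models_{AW}x$ means $x\in Cn_{AW}(E)$ ($E\models_{AW}G$ means this for all $x\in G$). A rule is an ordered pair $x\Rightarrow y$. For $R\subseteq L_{AW}\times L_{AW}$, $T\subseteq L_{AW}$: $R(T)=\{y\mid x\Rightarrow y\in R,x\in T\}$, $E_R(T)=\bigcap\{X\mid T\subseteq X,\ R(Cn_{AW}(X))\subseteq X\}$. An agent system specification $AS=\langle S,F,B,D,\geq,\delta^0\rangle$ consists of, for each agent $i$: finite $F_i\subseteq L_W$, finite belief rules $B_i\subseteq L_{AW}\times L_W$, finite desire rules $D_i\subseteq L_{AW}\times L_{AW}$, a total order $\geq_i$ on $D_i$, finite initial decision $\delta^0_i\subseteq L_A$; $F,B,D,\delta^0$ are the unions. A decision profile is $\delta=\langle\delta_1,\ldots,\delta_n\rangle$ with $\delta^0_i\subseteq\delta_i\subseteq L_{A_i}$;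 $E_B(F\cup\delta)=\bigcup_i E_{B_i}(F_i\cup\delta_i)$; feasible means $E_B(F\cup\delta)$ consistent. $U_i(\delta)=\{x\Rightarrow y\in D_i\mid E_B(F\cup\delta)\models_{AW}x,\ E_B(F\cup\delta)\not\models_{AW}y\}$; $U(\delta)=U(\delta')$ means $U_i(\delta)=U_i(\delta')$ for all $i$. $\Delta$ is U-closed if $\delta\in\Delta$ and $U(\delta)=U(\delta')$ imply $\delta'\in\Delta$. $\delta$ is a $\langle G^+,G^-\rangle$ decision if $E_B(F\cup\delta)\models_{AW}G^+$ and $E_B(F\cup\delta)\not\models_{AW}g$ for all $g\in G^-$. For U-closed $\Delta$ of feasible profiles, $\langle G^+,G^-\rangle$ is a $\Delta$ joint goal set if there is $\delta\in\Delta$ with $G^+=\{y\mid x\Rightarrow y\in D,\ E_B(F\cup\delta)\models_{AW}x\wedge y\}$ and $G^-=\{x\mid x\Rightarrow y\in D,\ E_B(F\cup\delta)\not\models_{AW}x\}$. *)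

theory Defs
  imports Main
begin

datatype 'a form = Atom 'a | FFalse | Neg "'a form" | Conj "'a form" "'a form"
  | Disj "'a form" "'a form" | Impl "'a form" "'a form"

fun atoms :: "'a form \<Rightarrow> 'a set" where
  "atoms (Atom p) = {p}"
| "atoms FFalse = {}"
| "atoms (Neg x) = atoms x"
| "atoms (Conj x y) = atoms x \<union> atoms y"
| "atoms (Disj x y) = atoms x \<union> atoms y"
| "atoms (Impl x y) = atoms x \<union> atoms y"

fun sat :: "('a \<Rightarrow> bool) \<Rightarrow> 'a form \<Rightarrow> bool" where
  "sat v (Atom p) = v p"
| "sat v FFalse = False"
| "sat v (Neg x) = (\<not> sat v x)"
| "sat v (Conj x y) = (sat v x \<and> sat v y)"
| "sat v (Disj x y) = (sat v x \<or> sat v y)"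
| "sat v (Impl x y) = (sat v x \<longrightarrow> sat v y)"

definition lang :: "'a set \<Rightarrow> 'a form set" where
  "lang X = {x. atoms x \<subseteq> X}"

definition Cn :: "'a set \<Rightarrow> 'a form set \<Rightarrow> 'a form set" where
  "Cn AW E = {x \<in> lang AW. \<forall>v. (\<forall>e\<in>E. sat v e) \<longrightarrow> sat v x}"

definition entails :: "'a set \<Rightarrow> 'a form set \<Rightarrow> 'a form \<Rightarrow> bool" where
  "entails AW E x \<longleftrightarrow> x \<in> Cn AW E"

definition rule_app :: "('a form \<times> 'a form) set \<Rightarrow> 'a form set \<Rightarrow> 'a form set" where
  "rule_app R T = {y. \<exists>x. (x, y) \<in> R \<and> x \<in> T}"

definition ext :: "'a set \<Rightarrow> ('a form \<times> 'a form) set \<Rightarrow> 'a form set \<Rightarrow> 'a form set" where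
  "ext AW R T = \<Inter> {X. T \<subseteq> X \<and> rule_app R (Cn AW X) \<subseteq> X}"

text \<open>Agents are the indices i < n. A i are the agent atoms, W the world atoms.
  F i, B i, D i, ge i, d0 i are the facts, belief rules, desire rules, total order
  on desire rules and initial decision of agent i.\<close>

definition allA :: "nat \<Rightarrow> (nat \<Rightarrow> 'a set) \<Rightarrow> 'a set" where
  "allA n A = (\<Union>i<n. A i)"

definition agent_system_spec ::
  "nat \<Rightarrow> (nat \<Rightarrow> 'a set) \<Rightarrow> 'a set \<Rightarrow> (nat \<Rightarrow> 'a form set)
   \<Rightarrow> (nat \<Rightarrow> ('a form \<times> 'a form) set) \<Rightarrow> (nat \<Rightarrow> ('a form \<times> 'a form) set)
   \<Rightarrow> (nat \<Rightarrow> (('a form \<times> 'a form) \<times> ('a form \<times> 'a form)) set)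
   \<Rightarrow> (nat \<Rightarrow> 'a form set) \<Rightarrow> bool" where
  "agent_system_spec n A W F B D ge d0 \<longleftrightarrow>
     (\<forall>i<n. \<forall>j<n. i \<noteq> j \<longrightarrow> A i \<inter> A j = {}) \<and>
     (\<forall>i<n. A i \<inter> W = {}) \<and>
     (\<forall>i<n. finite (F i) \<and> F i \<subseteq> lang W) \<and>
     (\<forall>i<n. finite (B i) \<and> B i \<subseteq> lang (allA n A \<union> W) \<times> lang W) \<and>
     (\<forall>i<n. finite (D i) \<and> D i \<subseteq> lang (allA n A \<union> W) \<times> lang (allA n A \<union> W)) \<and>
     (\<forall>i<n. linear_order_on (D i) (ge i)) \<and>
     (\<forall>i<n. finite (d0 i) \<and> d0 i \<subseteq> lang (allA n A))"

definition decision_profile ::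
  "nat \<Rightarrow> (nat \<Rightarrow> 'a set) \<Rightarrow> (nat \<Rightarrow> 'a form set) \<Rightarrow> (nat \<Rightarrow> 'a form set) \<Rightarrow> bool" where
  "decision_profile n A d0 \<delta> \<longleftrightarrow>
     (\<forall>i<n. d0 i \<subseteq> \<delta> i \<and> \<delta> i \<subseteq> lang (A i)) \<and> (\<forall>i\<ge>n. \<delta> i = {})"

definition EB ::
  "nat \<Rightarrow> 'a set \<Rightarrow> (nat \<Rightarrow> 'a form set) \<Rightarrow> (nat \<Rightarrow> ('a form \<times> 'a form) set)
   \<Rightarrow> (nat \<Rightarrow> 'a form set) \<Rightarrow> 'a form set" where
  "EB n AW F B \<delta> = (\<Union>i<n. ext AW (B i) (F i \<union> \<delta> i))"

definition consistent :: "'a set \<Rightarrow> 'a form set \<Rightarrow> bool" where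
  "consistent AW E \<longleftrightarrow> FFalse \<notin> Cn AW E"

definition feasible where
  "feasible n AW F B \<delta> \<longleftrightarrow> consistent AW (EB n AW F B \<delta>)"

definition unfulfilled ::
  "nat \<Rightarrow> 'a set \<Rightarrow> (nat \<Rightarrow> 'a form set) \<Rightarrow> (nat \<Rightarrow> ('a form \<times> 'a form) set)
   \<Rightarrow> (nat \<Rightarrow> ('a form \<times> 'a form) set) \<Rightarrow> (nat \<Rightarrow> 'a form set) \<Rightarrow> nat \<Rightarrow> ('a form \<times> 'a form) set" where
  "unfulfilled n AW F B D \<delta> i =
     {(x, y) \<in> D i. entails AW (EB n AW F B \<delta>) x \<and> \<not> entails AW (EB n AW F B \<delta>) y}"

definition U_closed where
  "U_closed n A W F B D d0 \<Delta> \<longleftrightarrow>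
     (\<forall>\<delta> \<delta>'. \<delta> \<in> \<Delta> \<and> decision_profile n A d0 \<delta>' \<and>
        (\<forall>i<n. unfulfilled n (allA n A \<union> W) F B D \<delta> i = unfulfilled n (allA n A \<union> W) F B D \<delta>' i)
        \<longrightarrow> \<delta>' \<in> \<Delta>)"

definition is_decision where
  "is_decision n AW F B \<delta> Gp Gm \<longleftrightarrow>
     (\<forall>g\<in>Gp. entails AW (EB n AW F B \<delta>) g) \<and> (\<forall>g\<in>Gm. \<not> entails AW (EB n AW F B \<delta>) g)"

definition joint_goal_set where
  "joint_goal_set n AW F B D \<Delta> Gp Gm \<longleftrightarrow>
     (\<exists>\<delta>\<in>\<Delta>.
        Gp = {y. \<exists>x. (x, y) \<in> (\<Union>i<n. D i) \<and> entails AW (EB n AW F B \<delta>) (Conj x y)} \<and>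
        Gm = {x. \<exists>y. (x, y) \<in> (\<Union>i<n. D i) \<and> \<not> entails AW (EB n AW F B \<delta>) x})"

end

theory Submission
  imports Defs
begin

(* The goal set induced by delta itself is a witness: delta entails every y whose
   rule x => y has x /\ y entailed, and by construction entails no element of G^-. *)

lemma entails_Conj_iff:
  "entails AW E (Conj x y) \<longleftrightarrow> entails AW E x \<and> entails AW E y"
  by (auto simp: entails_def Cn_def lang_def)

theorem mainTheorem3:
  fixes n :: nat and A :: "nat \<Rightarrow> 'a set" and W :: "'a set"
    and F :: "nat \<Rightarrow> 'a form set" and B D :: "nat \<Rightarrow> ('a form \<times> 'a form) set"
    and ge :: "nat \<Rightarrow> (('a form \<times> 'a form) \<times> ('a form \<times> 'a form)) set"
    and d0 :: "nat \<Rightarrow> 'a form set"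
    and \<Delta> :: "(nat \<Rightarrow> 'a form set) set"
  assumes AS: "agent_system_spec n A W F B D ge d0"
    and profiles: "\<forall>\<delta>\<in>\<Delta>. decision_profile n A d0 \<delta> \<and> feasible n (allA n A \<union> W) F B \<delta>"
    and closed: "U_closed n A W F B D d0 \<Delta>"
    and mem: "\<delta> \<in> \<Delta>"
  shows "\<exists>Gp Gm. joint_goal_set n (allA n A \<union> W) F B D \<Delta> Gp Gm \<and>
                is_decision n (allA n A \<union> W) F B \<delta> Gp Gm"
proof -
  let ?AW = "allA n A \<union> W"
  let ?E = "EB n ?AW F B \<delta>"
  let ?Gp = "{y. \<exists>x. (x, y) \<in> (\<Union>i<n. D i) \<and> entails ?AW ?E (Conj x y)}"
  let ?Gm = "{x. \<exists>y. (x, y) \<in> (\<Union>i<n. D i) \<and> \<not> entails ?AW ?E x}"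
  have "joint_goal_set n ?AW F B D \<Delta> ?Gp ?Gm"
    unfolding joint_goal_set_def using mem by blast
  moreover have "is_decision n ?AW F B \<delta> ?Gp ?Gm"
    unfolding is_decision_def by (auto simp: entails_Conj_iff)
  ultimately show ?thesis by blast
qed

end
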